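(* Let $\alpha:X\to P(A\times X+1)$ be a discrete probabilistic transition system with $X$ finite, and let $x,y\in X$. Then the algorithm $\texttt{HKC}^\infty(x,y)$ described in the context terminates (for any order of extraction from $\mathit{todo}$), and it returns true if and only if $\langle\!\langle x\rangle\!\rangle=\langle\!\langle y\rangle\!\rangle$.
   Context: $A$ is a finite alphabet, $1=\{*\}$, $P(Y)$ the set of finitely supported probability distributions on $Y$, $\delta_x$ the point mass at $x$. $A^\infty=A^*\cup A^\omega$ with $\sigma$-algebra generated by $\{\emptyset\}\cup\{\{w\}\mid w\in A^*\}\cup\{wA^\infty\mid w\in A^*\}$. The trace semantics $\langle\!\langle x\rangle\!\rangle$ is the unique family of sub-probability measures on $A^\infty$ with $\langle\!\langle x\rangle\!\rangle(A^\infty)=1$, $\langle\!\langle x\rangle\!\rangle(\{\varepsilon\})=\alpha(x)( * )$, $\langle\!\langle x\rangle\!\rangle(awA^\infty)=\sum_y\alpha(x)(a,y)\langle\!\langle y\rangle\!\rangle(wA^\infty)$, $\langle\!\langle x\rangle\!\rangle(\{aw\})=\sum_y\alpha(x)(a,y)\langle\!\langle y\rangle\!\rangle(\{w\})$. On $\mathbb R^X$ define linear maps $\beta_1(u)=\sum_x u(x)$, $\beta_*(u)=\sum_x u(x)\alpha(x)( * )$, $\tau_a(u)(y)=\sum_x u(x)\alpha(x)(a,y)$. For $R\subseteq\mathbb R^X\times\mathbb R^X$, its congruence closure $c(R)$ is the smallest relation containing $R$ that is reflexive, symmetric, transitive, and closed under $(u,v)\mapsto(\lambda u,\lambda v)$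 for $\lambda\in\mathbb R$ and under $(u,v),(u',v')\mapsto(u+u',v+v')$. Algorithm $\texttt{HKC}^\infty(x,y)$: set $R:=\emptyset$, $\mathit{todo}:=\{(\delta_x,\delta_y)\}$; while $\mathit{todo}\neq\emptyset$: extract a pair $(u,v)$ from $\mathit{todo}$; if $(u,v)\in c(R)$, continue with the next iteration; if $\beta_1(u)\neq\beta_1(v)$ or $\beta_*(u)\neq\beta_*(v)$, return false; for all $a\in A$ insert $(\tau_a(u),\tau_a(v))$ into $\mathit{todo}$; insert $(u,v)$ into $R$. When $\mathit{todo}$ is empty, return true. *)

theory Defs
  imports "HOL-Probability.Probability"
begin

(* A discrete probabilistic transition system alpha : X -> P(A x X + 1) is modelled as
   alpha :: 'x => ('a * 'x) option pmf, where None plays the role of the element * of 1.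
   X and A are finite types, so every distribution is finitely supported. *)

(* A^infinity = A^* \<union> A^omega: finite words are Inl w, infinite words are Inr f. *)
type_synonym 'a word_inf = "'a list + (nat \<Rightarrow> 'a)"

definition cone :: "'a list \<Rightarrow> 'a word_inf set" where
  "cone w = {Inl v | v. \<exists>r. v = w @ r} \<union> {Inr f | f. \<forall>i < length w. f i = w ! i}"

definition inf_gens :: "'a word_inf set set" where
  "inf_gens = {{}} \<union> range (\<lambda>w. {Inl w}) \<union> range cone"

definition Ainf :: "'a word_inf measure" where
  "Ainf = sigma UNIV inf_gens"

definition is_trace_sem :: "('x::finite \<Rightarrow> ('a \<times> 'x) option pmf) \<Rightarrow> ('x \<Rightarrow> 'a word_inf measure) \<Rightarrow> bool" where
  "is_trace_sem \<alpha> tr \<longleftrightarrow>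
     (\<forall>x. sets (tr x) = sets Ainf \<and> space (tr x) = space Ainf \<and>
        emeasure (tr x) UNIV = 1 \<and>
        emeasure (tr x) {Inl []} = ennreal (pmf (\<alpha> x) None) \<and>
        (\<forall>a w. emeasure (tr x) (cone (a # w)) =
            (\<Sum>y\<in>UNIV. ennreal (pmf (\<alpha> x) (Some (a, y))) * emeasure (tr y) (cone w))) \<and>
        (\<forall>a w. emeasure (tr x) {Inl (a # w)} =
            (\<Sum>y\<in>UNIV. ennreal (pmf (\<alpha> x) (Some (a, y))) * emeasure (tr y) {Inl w})))"

definition beta1 :: "('x::finite \<Rightarrow> real) \<Rightarrow> real" where
  "beta1 u = (\<Sum>x\<in>UNIV. u x)"

definition betastar :: "('x::finite \<Rightarrow> ('a \<times> 'x) option pmf) \<Rightarrow> ('x \<Rightarrow> real) \<Rightarrow> real" where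
  "betastar \<alpha> u = (\<Sum>x\<in>UNIV. u x * pmf (\<alpha> x) None)"

definition tau :: "('x::finite \<Rightarrow> ('a \<times> 'x) option pmf) \<Rightarrow> 'a \<Rightarrow> ('x \<Rightarrow> real) \<Rightarrow> ('x \<Rightarrow> real)" where
  "tau \<alpha> a u = (\<lambda>y. \<Sum>x\<in>UNIV. u x * pmf (\<alpha> x) (Some (a, y)))"

definition dirac_vec :: "'x \<Rightarrow> ('x \<Rightarrow> real)" where
  "dirac_vec x = (\<lambda>z. if z = x then 1 else 0)"

inductive_set cclos :: "(('x \<Rightarrow> real) \<times> ('x \<Rightarrow> real)) set \<Rightarrow> (('x \<Rightarrow> real) \<times> ('x \<Rightarrow> real)) set"
  for R where
  base: "p \<in> R \<Longrightarrow> p \<in> cclos R"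
| refl: "(u, u) \<in> cclos R"
| sym: "(u, v) \<in> cclos R \<Longrightarrow> (v, u) \<in> cclos R"
| trans: "(u, v) \<in> cclos R \<Longrightarrow> (v, w) \<in> cclos R \<Longrightarrow> (u, w) \<in> cclos R"
| scale: "(u, v) \<in> cclos R \<Longrightarrow> (\<lambda>z. c * u z, \<lambda>z. c * v z) \<in> cclos R"
| add: "(u, v) \<in> cclos R \<Longrightarrow> (u', v') \<in> cclos R \<Longrightarrow> (\<lambda>z. u z + u' z, \<lambda>z. v z + v' z) \<in> cclos R"

datatype 'x hkc_state =
    Running "(('x \<Rightarrow> real) \<times> ('x \<Rightarrow> real)) set" "(('x \<Rightarrow> real) \<times> ('x \<Rightarrow> real)) multiset"
  | Done bool

(* one iteration of the while loop; the extracted pair is chosen arbitrarily *)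
inductive hkc_step :: "('x::finite \<Rightarrow> ('a::finite \<times> 'x) option pmf) \<Rightarrow> 'x hkc_state \<Rightarrow> 'x hkc_state \<Rightarrow> bool"
  for \<alpha> where
  finish: "hkc_step \<alpha> (Running R {#}) (Done True)"
| skip: "p \<in># todo \<Longrightarrow> p \<in> cclos R \<Longrightarrow>
     hkc_step \<alpha> (Running R todo) (Running R (todo - {#p#}))"
| fail: "(u, v) \<in># todo \<Longrightarrow> (u, v) \<notin> cclos R \<Longrightarrow>
     beta1 u \<noteq> beta1 v \<or> betastar \<alpha> u \<noteq> betastar \<alpha> v \<Longrightarrow>
     hkc_step \<alpha> (Running R todo) (Done False)"
| expand: "(u, v) \<in># todo \<Longrightarrow> (u, v) \<notin> cclos R \<Longrightarrow>
     beta1 u = beta1 v \<Longrightarrow> betastar \<alpha> u = betastar \<alpha> v \<Longrightarrow>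
     hkc_step \<alpha> (Running R todo)
       (Running (insert (u, v) R)
          ((todo - {#(u, v)#}) + image_mset (\<lambda>a. (tau \<alpha> a u, tau \<alpha> a v)) (mset_set (UNIV :: 'a set))))"

definition hkc_init :: "'x \<Rightarrow> 'x \<Rightarrow> 'x hkc_state" where
  "hkc_init x y = Running {} {#(dirac_vec x, dirac_vec y)#}"

end

theory Submission
  imports Defs
begin

text \<open>
  A vector \<open>u \<in> \<real>\<^sup>X\<close> is paired with the functions \<open>x \<mapsto> \<langle>\<langle>x\<rangle>\<rangle>(w A\<^sup>\<infinity>)\<close> and
  \<open>x \<mapsto> \<langle>\<langle>x\<rangle>\<rangle>({w})\<close>; two vectors are trace equivalent when all these pairings agree.
  The defining equations of the trace semantics say that the pairings for \<open>\<epsilon>\<close> are \<open>\<beta>\<^sub>1\<close>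
  and \<open>\<beta>\<^sub>*\<close>, and that those for \<open>a w\<close> are the ones for \<open>w\<close> precomposed with \<open>\<tau>\<^sub>a\<close>.
  Hence, if \<open>\<langle>\<langle>x\<rangle>\<rangle> = \<langle>\<langle>y\<rangle>\<rangle>\<close>, every pair ever put into \<open>todo\<close> is trace equivalent and the
  algorithm cannot fail. Conversely, when it returns true, \<open>R\<close> progresses to \<open>c(R)\<close>;
  pairings are linear, so by induction on \<open>w\<close> all of them agree on \<open>c(R)\<close>, in particular
  on \<open>(\<delta>\<^sub>x, \<delta>\<^sub>y)\<close>, and the two measures agree on an \<open>\<inter>\<close>-stable generator of the
  \<open>\<sigma>\<close>-algebra. Termination: \<open>c(R)\<close> contains every \<open>(u, v)\<close> with \<open>u - v\<close> in the span of
  the differences of pairs in \<open>R\<close>, so each pair added to \<open>R\<close> raises the dimension of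
  that span, which is bounded by \<open>|X|\<close>; between two such steps \<open>todo\<close> shrinks.
\<close>

section \<open>Congruence closure and linear functionals\<close>

lemma cclos_subset_cclos:
  assumes "S \<subseteq> cclos S'"
  shows "cclos S \<subseteq> cclos S'"
proof
  fix p assume "p \<in> cclos S"
  then show "p \<in> cclos S'"
    by induction (use assms in \<open>auto intro: cclos.intros\<close>)
qed

lemma cclos_mono: "S \<subseteq> S' \<Longrightarrow> cclos S \<subseteq> cclos S'"
  by (rule cclos_subset_cclos) (auto intro: cclos.base)

lemma cclos_insert_absorb:
  assumes "p \<in> cclos S"
  shows "cclos (insert p S) = cclos S"
  using cclos_subset_cclos[of "insert p S" S] cclos_mono[of S "insert p S"] assms
  by (auto intro: cclos.base)

lemma cclos_linear_eq:
  assumes "(u, v) \<in> cclos R" "\<forall>(u', v')\<in>R. F u' = F v'"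
    and "\<And>c u. F (\<lambda>z. c * u z) = c * F u"
    and "\<And>u u'. F (\<lambda>z. u z + u' z) = F u + F u'"
  shows "F u = F v"
proof -
  have "F (fst p) = F (snd p)" if "p \<in> cclos R" for p
    using that by induction (use assms(2-4) in auto)
  from this[OF assms(1)] show ?thesis by simp
qed

definition pairing :: "('x::finite \<Rightarrow> real) \<Rightarrow> ('x \<Rightarrow> real) \<Rightarrow> real" where
  "pairing g u = (\<Sum>x\<in>UNIV. u x * g x)"

lemma pairing_cclos_eq:
  assumes "(u, v) \<in> cclos R" "\<forall>(u', v')\<in>R. pairing g u' = pairing g v'"
  shows "pairing g u = pairing g v"
  by (rule cclos_linear_eq[OF assms])
    (simp_all add: pairing_def sum_distrib_left sum.distrib algebra_simps)

lemma pairing_dirac_vec: "pairing g (dirac_vec x) = g x"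
proof -
  have delta: "(\<lambda>z. dirac_vec x z * g z) = (\<lambda>z. if x = z then g z else 0)"
    by (auto simp: dirac_vec_def)
  show ?thesis
    unfolding pairing_def delta by simp
qed

lemma pairing_tau:
  assumes "\<And>x. g' x = (\<Sum>y\<in>UNIV. pmf (\<alpha> x) (Some (a, y)) * g y)"
  shows "pairing g' u = pairing g (tau \<alpha> a u)"
proof -
  have "pairing g' u = (\<Sum>x\<in>UNIV. \<Sum>y\<in>UNIV. u x * pmf (\<alpha> x) (Some (a, y)) * g y)"
    unfolding pairing_def assms by (simp add: sum_distrib_left mult.assoc)
  also have "\<dots> = (\<Sum>y\<in>UNIV. \<Sum>x\<in>UNIV. u x * pmf (\<alpha> x) (Some (a, y)) * g y)"
    by (rule sum.swap)
  also have "\<dots> = pairing g (tau \<alpha> a u)"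
    unfolding pairing_def tau_def by (simp add: sum_distrib_right)
  finally show ?thesis .
qed

section \<open>Trace semantics\<close>

definition cone_prob :: "('x \<Rightarrow> 'a word_inf measure) \<Rightarrow> 'a list \<Rightarrow> 'x \<Rightarrow> real" where
  "cone_prob tr w x = measure (tr x) (cone w)"

definition word_prob :: "('x \<Rightarrow> 'a word_inf measure) \<Rightarrow> 'a list \<Rightarrow> 'x \<Rightarrow> real" where
  "word_prob tr w x = measure (tr x) {Inl w}"

lemma cone_Nil: "cone [] = UNIV"
proof -
  have "z \<in> cone []" for z :: "'a word_inf"
    by (cases z) (auto simp: cone_def)
  then show ?thesis by auto
qed

lemma space_Ainf: "space Ainf = UNIV"
  unfolding Ainf_def by (simp add: space_measure_of_conv)

lemma sets_Ainf: "sets Ainf = sigma_sets UNIV inf_gens"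
  unfolding Ainf_def by (rule sets_measure_of) simp

lemma finite_measure_trace_sem:
  assumes "is_trace_sem \<alpha> tr"
  shows "finite_measure (tr x)"
  using assms by (intro finite_measureI) (simp add: is_trace_sem_def space_Ainf)

lemma emeasure_trace_sem:
  assumes "is_trace_sem \<alpha> tr"
  shows "emeasure (tr x) A = ennreal (measure (tr x) A)"
  using finite_measure.emeasure_eq_measure[OF finite_measure_trace_sem[OF assms]] .

lemma eq_sum_mult_of_ennreal:
  fixes a :: real and p b :: "'y \<Rightarrow> real"
  assumes "ennreal a = (\<Sum>y\<in>A. ennreal (p y) * ennreal (b y))"
    and "a \<ge> 0" "\<And>y. p y \<ge> 0" "\<And>y. b y \<ge> 0"
  shows "a = (\<Sum>y\<in>A. p y * b y)"
proof -
  have "ennreal a = ennreal (\<Sum>y\<in>A. p y * b y)"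
    using assms by (simp add: ennreal_mult[symmetric] sum_ennreal)
  then show ?thesis
    using assms(2-4) by (simp add: sum_nonneg)
qed

lemma cone_prob_Nil:
  assumes "is_trace_sem \<alpha> tr"
  shows "cone_prob tr [] x = 1"
  using assms by (simp add: is_trace_sem_def cone_prob_def cone_Nil measure_def)

lemma word_prob_Nil:
  assumes "is_trace_sem \<alpha> tr"
  shows "word_prob tr [] x = pmf (\<alpha> x) None"
  using assms by (simp add: is_trace_sem_def word_prob_def measure_def)

lemma cone_prob_Cons:
  assumes "is_trace_sem \<alpha> tr"
  shows "cone_prob tr (a # w) x = (\<Sum>y\<in>UNIV. pmf (\<alpha> x) (Some (a, y)) * cone_prob tr w y)"
  using assms unfolding cone_prob_def
  by (intro eq_sum_mult_of_ennreal)
    (simp_all add: is_trace_sem_def emeasure_trace_sem[OF assms, symmetric])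

lemma word_prob_Cons:
  assumes "is_trace_sem \<alpha> tr"
  shows "word_prob tr (a # w) x = (\<Sum>y\<in>UNIV. pmf (\<alpha> x) (Some (a, y)) * word_prob tr w y)"
  using assms unfolding word_prob_def
  by (intro eq_sum_mult_of_ennreal)
    (simp_all add: is_trace_sem_def emeasure_trace_sem[OF assms, symmetric])

lemma pairing_cone_prob_Nil:
  "is_trace_sem \<alpha> tr \<Longrightarrow> pairing (cone_prob tr []) u = beta1 u"
  by (simp add: pairing_def beta1_def cone_prob_Nil)

lemma pairing_word_prob_Nil:
  "is_trace_sem \<alpha> tr \<Longrightarrow> pairing (word_prob tr []) u = betastar \<alpha> u"
  by (simp add: pairing_def betastar_def word_prob_Nil)

lemma pairing_cone_prob_Cons:
  "is_trace_sem \<alpha> tr \<Longrightarrow> pairing (cone_prob tr (a # w)) u = pairing (cone_prob tr w) (tau \<alpha> a u)"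
  by (rule pairing_tau) (rule cone_prob_Cons)

lemma pairing_word_prob_Cons:
  "is_trace_sem \<alpha> tr \<Longrightarrow> pairing (word_prob tr (a # w)) u = pairing (word_prob tr w) (tau \<alpha> a u)"
  by (rule pairing_tau) (rule word_prob_Cons)

lemma cone_mono_append: "cone (v @ r) \<subseteq> cone v"
  unfolding cone_def by (auto simp: nth_append)

lemma cone_inter_nonempty_prefix:
  assumes "z \<in> cone v" "z \<in> cone w"
  shows "(\<exists>r. w = v @ r) \<or> (\<exists>r. v = w @ r)"
proof (cases z)
  case (Inl s)
  with assms have "\<exists>r1. s = v @ r1" "\<exists>r2. s = w @ r2"
    unfolding cone_def by auto
  then obtain r1 r2 where "s = v @ r1" "s = w @ r2" by blast
  then show ?thesis by (metis append_eq_append_conv2)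
next
  case (Inr f)
  then have v: "\<forall>i<length v. f i = v ! i" and w: "\<forall>i<length w. f i = w ! i"
    using assms unfolding cone_def by auto
  consider "length v \<le> length w" | "length w \<le> length v" by linarith
  then show ?thesis
  proof cases
    case 1
    have "take (length v) w = v"
      by (rule nth_equalityI) (use 1 v w in auto)
    then show ?thesis by (metis append_take_drop_id)
  next
    case 2
    have "take (length w) v = w"
      by (rule nth_equalityI) (use 2 v w in auto)
    then show ?thesis by (metis append_take_drop_id)
  qed
qed

lemma Int_stable_inf_gens: "Int_stable inf_gens"
proof (rule Int_stableI)
  have empty: "{} \<in> inf_gens"
    unfolding inf_gens_def by simp
  have cone_Int: "cone v \<inter> cone w \<in> inf_gens" for v w :: "'a list"
  proof -
    consider r where "w = v @ r" | r where "v = w @ r" | "cone v \<inter> cone w = {}"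
      using cone_inter_nonempty_prefix by blast
    then have "cone v \<inter> cone w \<in> {cone w, cone v, {}}"
      by cases (use cone_mono_append in blast)+
    then show ?thesis
      unfolding inf_gens_def by auto
  qed
  have single_Int: "{Inl w} \<inter> X \<in> inf_gens" "X \<inter> {Inl w} \<in> inf_gens" for w and X :: "'a word_inf set"
    using empty by (cases "Inl w \<in> X"; simp add: inf_gens_def)+
  fix A B :: "'a word_inf set"
  assume "A \<in> inf_gens" "B \<in> inf_gens"
  then have "A = {} \<or> (\<exists>w. A = {Inl w}) \<or> (\<exists>v. A = cone v)"
    and "B = {} \<or> (\<exists>w. B = {Inl w}) \<or> (\<exists>v. B = cone v)"
    unfolding inf_gens_def by auto
  then show "A \<inter> B \<in> inf_gens"
    by (elim disjE exE) (use empty single_Int cone_Int in auto)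
qed

lemma trace_sem_eqI:
  assumes tr: "is_trace_sem \<alpha> tr"
    and eq: "\<And>w. cone_prob tr w x = cone_prob tr w y" "\<And>w. word_prob tr w x = word_prob tr w y"
  shows "tr x = tr y"
proof (rule measure_eqI_generator_eq[where E=inf_gens and \<Omega>=UNIV and A="\<lambda>_. cone []"])
  show "Int_stable inf_gens" by (rule Int_stable_inf_gens)
  show "emeasure (tr x) X = emeasure (tr y) X" if "X \<in> inf_gens" for X
    using that eq unfolding inf_gens_def cone_prob_def word_prob_def
    by (auto simp: emeasure_trace_sem[OF tr])
  show "sets (tr x) = sigma_sets UNIV inf_gens" "sets (tr y) = sigma_sets UNIV inf_gens"
    using tr sets_Ainf unfolding is_trace_sem_def by auto
  show "range (\<lambda>_. cone []) \<subseteq> inf_gens" unfolding inf_gens_def by auto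
  show "emeasure (tr x) (cone []) \<noteq> \<infinity>" for i :: nat by (simp add: emeasure_trace_sem[OF tr])
qed (simp_all add: cone_Nil)

definition trace_equiv :: "('x::finite \<Rightarrow> 'a word_inf measure) \<Rightarrow> ('x \<Rightarrow> real) \<Rightarrow> ('x \<Rightarrow> real) \<Rightarrow> bool" where
  "trace_equiv tr u v \<longleftrightarrow>
     (\<forall>w. pairing (cone_prob tr w) u = pairing (cone_prob tr w) v \<and>
          pairing (word_prob tr w) u = pairing (word_prob tr w) v)"

lemma trace_equiv_tau:
  assumes tr: "is_trace_sem \<alpha> tr" and "trace_equiv tr u v"
  shows "trace_equiv tr (tau \<alpha> a u) (tau \<alpha> a v)"
  using assms(2) unfolding trace_equiv_def
  by (simp add: pairing_cone_prob_Cons[OF tr, symmetric] pairing_word_prob_Cons[OF tr, symmetric])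

lemma trace_equiv_beta:
  assumes tr: "is_trace_sem \<alpha> tr" and "trace_equiv tr u v"
  shows "beta1 u = beta1 v" "betastar \<alpha> u = betastar \<alpha> v"
  using assms(2) unfolding trace_equiv_def
  by (metis pairing_cone_prob_Nil[OF tr], metis pairing_word_prob_Nil[OF tr])

lemma trace_equiv_dirac_vec_iff:
  assumes "is_trace_sem \<alpha> tr"
  shows "trace_equiv tr (dirac_vec x) (dirac_vec y) \<longleftrightarrow> tr x = tr y"
proof
  assume "trace_equiv tr (dirac_vec x) (dirac_vec y)"
  then show "tr x = tr y"
    by (intro trace_sem_eqI[OF assms]) (simp_all add: trace_equiv_def pairing_dirac_vec)
qed (simp add: trace_equiv_def pairing_dirac_vec cone_prob_def word_prob_def)

definition progresses_to ::
  "('x::finite \<Rightarrow> ('a \<times> 'x) option pmf) \<Rightarrow> (('x \<Rightarrow> real) \<times> ('x \<Rightarrow> real)) set \<Rightarrow>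
   (('x \<Rightarrow> real) \<times> ('x \<Rightarrow> real)) set \<Rightarrow> bool" where
  "progresses_to \<alpha> R S \<longleftrightarrow>
     (\<forall>(u, v)\<in>R. beta1 u = beta1 v \<and> betastar \<alpha> u = betastar \<alpha> v \<and>
                 (\<forall>a. (tau \<alpha> a u, tau \<alpha> a v) \<in> cclos S))"

lemma progresses_to_cclos_mono:
  "progresses_to \<alpha> R S \<Longrightarrow> cclos S \<subseteq> cclos S' \<Longrightarrow> progresses_to \<alpha> R S'"
  unfolding progresses_to_def by blast

lemma trace_equiv_if_bisim_up_to_cclos:
  assumes tr: "is_trace_sem \<alpha> tr" and R: "progresses_to \<alpha> R R" and uv: "(u, v) \<in> cclos R"
  shows "trace_equiv tr u v"
proof -
  have "(\<forall>(u, v)\<in>R. pairing (cone_prob tr w) u = pairing (cone_prob tr w) v) \<and>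
        (\<forall>(u, v)\<in>R. pairing (word_prob tr w) u = pairing (word_prob tr w) v)" for w
  proof (induction w)
    case Nil
    then show ?case
      using R by (auto simp: progresses_to_def pairing_cone_prob_Nil[OF tr] pairing_word_prob_Nil[OF tr])
  next
    case (Cons a w)
    have "(tau \<alpha> a u, tau \<alpha> a v) \<in> cclos R" if "(u, v) \<in> R" for u v
      using R that by (auto simp: progresses_to_def)
    then show ?case
      unfolding pairing_cone_prob_Cons[OF tr] pairing_word_prob_Cons[OF tr]
      using pairing_cclos_eq Cons.IH by fast
  qed
  then show ?thesis
    unfolding trace_equiv_def using pairing_cclos_eq[OF uv] by blast
qed

section \<open>Termination\<close>

text \<open>Differences are taken in \<open>real^'x\<close> rather than \<open>'x \<Rightarrow> real\<close> so that
  \<open>span\<close> and \<open>dim\<close> of the Euclidean space \<open>\<real>\<^sup>X\<close> are available.\<close>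

definition diff_vec :: "('x::finite \<Rightarrow> real) \<Rightarrow> ('x \<Rightarrow> real) \<Rightarrow> real^'x" where
  "diff_vec u v = (\<chi> z. u z - v z)"

definition diffs :: "(('x::finite \<Rightarrow> real) \<times> ('x \<Rightarrow> real)) set \<Rightarrow> (real^'x) set" where
  "diffs R = (\<lambda>(u, v). diff_vec u v) ` R"

lemma cclos_translate_if_in_span_diffs:
  assumes "d \<in> span (diffs R)"
  shows "((\<lambda>z. d $ z + v z), v) \<in> cclos R"
  using assms
proof (induction arbitrary: v rule: span_induct_alt)
  case base
  then show ?case by (simp add: cclos.refl)
next
  case (step c e d)
  then obtain a b where ab: "(a, b) \<in> R" "e = diff_vec a b"
    unfolding diffs_def by auto
  \<comment> \<open>scale \<open>(a, b)\<close> by \<open>c\<close> and shift both sides so that the right one becomes \<open>d + v\<close>\<close>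
  define w where "w = (\<lambda>z. d $ z + v z - c * b z)"
  have "((\<lambda>z. c * a z + w z), (\<lambda>z. c * b z + w z)) \<in> cclos R"
    using ab(1) by (intro cclos.add cclos.scale cclos.base cclos.refl)
  moreover have "(\<lambda>z. c * a z + w z) = (\<lambda>z. (c *\<^sub>R e + d) $ z + v z)"
    unfolding w_def ab(2) diff_vec_def by (simp add: algebra_simps)
  moreover have "(\<lambda>z. c * b z + w z) = (\<lambda>z. d $ z + v z)"
    unfolding w_def by simp
  ultimately show ?case
    using step.IH by (metis cclos.trans)
qed

lemma dim_diffs_insert:
  assumes "(u, v) \<notin> cclos R"
  shows "dim (diffs (insert (u, v) R)) = Suc (dim (diffs R))"
proof -
  have "diff_vec u v \<notin> span (diffs R)"
  proof
    assume "diff_vec u v \<in> span (diffs R)"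
    from cclos_translate_if_in_span_diffs[OF this, of v] assms show False
      by (simp add: diff_vec_def)
  qed
  then show ?thesis by (simp add: diffs_def dim_insert)
qed

text \<open>The weight \<open>k = |A|\<close> pays for the successors pushed when \<open>R\<close> grows; the summand
  \<open>1\<close> makes the final step to \<open>Done\<close> decrease the measure as well.\<close>

fun hkc_measure :: "nat \<Rightarrow> ('x::finite) hkc_state \<Rightarrow> nat" where
  "hkc_measure k (Running R todo) = (CARD('x) - dim (diffs R)) * k + size todo + 1"
| "hkc_measure k (Done b) = 0"

lemma hkc_step_measure_less:
  fixes \<alpha> :: "'x::finite \<Rightarrow> ('a::finite \<times> 'x) option pmf"
  assumes "hkc_step \<alpha> s s'"
  shows "hkc_measure CARD('a) s' < hkc_measure CARD('a) s"
  using assms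
proof cases
  case (skip p todo R)
  then show ?thesis
    by (simp add: size_Diff1_less)
next
  case (expand u v todo R)
  define n where "n = CARD('x) - dim (diffs (insert (u, v) R))"
  have "CARD('x) - dim (diffs R) = Suc n"
    using dim_subset_UNIV_cart[of "diffs (insert (u, v) R)"] dim_diffs_insert[OF expand(4)]
    unfolding n_def by simp
  moreover have "size (todo - {#(u, v)#}) < size todo"
    using expand(3) by (rule size_Diff1_less)
  ultimately show ?thesis
    unfolding expand(1,2) hkc_measure.simps size_union size_image_mset size_mset_set
    by (simp add: n_def[symmetric])
qed simp_all

lemma wf_hkc_step:
  fixes \<alpha> :: "'x::finite \<Rightarrow> ('a::finite \<times> 'x) option pmf"
  shows "wf {(s', s). hkc_step \<alpha> s s'}"
proof (rule wf_subset)
  show "{(s', s). hkc_step \<alpha> s s'} \<subseteq> Wellfounded.measure (hkc_measure CARD('a))"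
    using hkc_step_measure_less by auto
qed simp

section \<open>Correctness\<close>

definition hkc_invariant ::
  "('x::finite \<Rightarrow> ('a \<times> 'x) option pmf) \<Rightarrow> ('x \<Rightarrow> 'a word_inf measure) \<Rightarrow> 'x \<Rightarrow> 'x \<Rightarrow>
   'x hkc_state \<Rightarrow> bool" where
  "hkc_invariant \<alpha> tr x y s = (case s of
     Running R todo \<Rightarrow>
       (dirac_vec x, dirac_vec y) \<in> cclos (R \<union> set_mset todo) \<and>
       progresses_to \<alpha> R (R \<union> set_mset todo) \<and>
       (tr x = tr y \<longrightarrow> (\<forall>(u, v)\<in>#todo. trace_equiv tr u v))
   | Done b \<Rightarrow> (b \<longleftrightarrow> tr x = tr y))"

lemma hkc_invariant_init:
  "is_trace_sem \<alpha> tr \<Longrightarrow> hkc_invariant \<alpha> tr x y (hkc_init x y)"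
  by (auto simp: hkc_invariant_def hkc_init_def progresses_to_def trace_equiv_dirac_vec_iff
      intro: cclos.base)

lemma hkc_invariant_step:
  fixes \<alpha> :: "'x::finite \<Rightarrow> ('a::finite \<times> 'x) option pmf"
  assumes tr: "is_trace_sem \<alpha> tr"
    and step: "hkc_step \<alpha> s s'" and inv: "hkc_invariant \<alpha> tr x y s"
  shows "hkc_invariant \<alpha> tr x y s'"
  using step
proof cases
  case (finish R)
  with inv have "progresses_to \<alpha> R R" "(dirac_vec x, dirac_vec y) \<in> cclos R"
    by (simp_all add: hkc_invariant_def)
  then have "tr x = tr y"
    using trace_equiv_if_bisim_up_to_cclos[OF tr] trace_equiv_dirac_vec_iff[OF tr] by blast
  with finish show ?thesis
    by (simp add: hkc_invariant_def)
next
  case (skip p todo R)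
  have "R \<union> set_mset todo \<subseteq> insert p (R \<union> set_mset (todo - {#p#}))"
    by (auto simp: in_diff_count)
  moreover have "p \<in> cclos (R \<union> set_mset (todo - {#p#}))"
    using skip(4) cclos_mono[of R] by blast
  ultimately have "cclos (R \<union> set_mset todo) \<subseteq> cclos (R \<union> set_mset (todo - {#p#}))"
    using cclos_mono cclos_insert_absorb by metis
  then show ?thesis
    using inv skip progresses_to_cclos_mono
    by (auto simp: hkc_invariant_def dest: in_diffD)
next
  case (fail u v todo R)
  have "tr x \<noteq> tr y"
  proof
    assume "tr x = tr y"
    with inv fail have "trace_equiv tr u v"
      by (auto simp: hkc_invariant_def)
    with fail show False
      using trace_equiv_beta[OF tr] by blast
  qed
  with fail show ?thesis
    by (simp add: hkc_invariant_def)
next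
  case (expand u v todo R)
  let ?succs = "image_mset (\<lambda>a. (tau \<alpha> a u, tau \<alpha> a v)) (mset_set (UNIV :: 'a set))"
  let ?S' = "insert (u, v) R \<union> set_mset (todo - {#(u, v)#} + ?succs)"
  have "R \<union> set_mset todo \<subseteq> ?S'"
    by (auto simp: in_diff_count)
  then have mono: "cclos (R \<union> set_mset todo) \<subseteq> cclos ?S'"
    by (rule cclos_mono)
  have succs: "(tau \<alpha> a u, tau \<alpha> a v) \<in> cclos ?S'" for a
    by (intro cclos.base) simp
  from inv expand mono have "progresses_to \<alpha> R ?S'"
    by (auto simp: hkc_invariant_def intro: progresses_to_cclos_mono)
  with succs expand(5,6) have "progresses_to \<alpha> (insert (u, v) R) ?S'"
    unfolding progresses_to_def by blast
  moreover have "\<forall>(u', v')\<in>#todo - {#(u, v)#} + ?succs. trace_equiv tr u' v'" if "tr x = tr y"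
  proof -
    from inv expand that have "\<forall>(u', v')\<in>#todo. trace_equiv tr u' v'"
      by (simp add: hkc_invariant_def)
    with expand(3) show ?thesis
      using trace_equiv_tau[OF tr] by (fastforce dest: in_diffD)
  qed
  ultimately show ?thesis
    using inv expand mono by (auto simp: hkc_invariant_def)
qed

lemma hkc_invariant_reachable:
  assumes "is_trace_sem \<alpha> tr" "(hkc_step \<alpha>)\<^sup>*\<^sup>* (hkc_init x y) s"
  shows "hkc_invariant \<alpha> tr x y s"
  using assms(2)
  by induction (use assms(1) hkc_invariant_init hkc_invariant_step in blast)+

theorem mainTheorem18:
  fixes \<alpha> :: "'x::finite \<Rightarrow> ('a::finite \<times> 'x) option pmf"
    and tr :: "'x \<Rightarrow> 'a word_inf measure"
    and x y :: 'x
  assumes "is_trace_sem \<alpha> tr"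
  shows "\<not> (\<exists>f. f 0 = hkc_init x y \<and> (\<forall>i. hkc_step \<alpha> (f i) (f (Suc i)))) \<and>
         (\<forall>b. (hkc_step \<alpha>)\<^sup>*\<^sup>* (hkc_init x y) (Done b) \<longrightarrow> (b \<longleftrightarrow> tr x = tr y))"
proof
  show "\<not> (\<exists>f. f 0 = hkc_init x y \<and> (\<forall>i. hkc_step \<alpha> (f i) (f (Suc i))))"
    using wf_hkc_step[of \<alpha>] by (auto simp: wf_iff_no_infinite_down_chain)
  show "\<forall>b. (hkc_step \<alpha>)\<^sup>*\<^sup>* (hkc_init x y) (Done b) \<longrightarrow> (b \<longleftrightarrow> tr x = tr y)"
  proof (intro allI impI)
    fix b
    assume "(hkc_step \<alpha>)\<^sup>*\<^sup>* (hkc_init x y) (Done b)"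
    from hkc_invariant_reachable[OF assms this] show "b \<longleftrightarrow> tr x = tr y"
      by (simp add: hkc_invariant_def)
  qed
qed

end
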